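(* Let $n\ge1$ and let $f\colon S^1\to\mathbb{R}$ be a smooth function having at least $2n$ local extrema, all of whose critical points are non-degenerate. Then for almost every $v=(x,y,z)\in\mathbb{S}^2\subset\mathbb{R}^3$ with $y^2-4xz>0$, the function $$h_v(t)=x f(t)+y f'(t)+z f''(t)$$ has at least $n$ local maxima on $S^1$.
   Context: $\mathbb{S}^2=\{(x,y,z)\in\mathbb{R}^3: x^2+y^2+z^2=1\}$ with its standard area measure; "almost every" refers to this measure. *)

theory Defs
  imports "HOL-Analysis.Analysis"
begin

definition sphere2 :: "(real \<times> real \<times> real) set" where
  "sphere2 = {(x, y, z). x\<^sup>2 + y\<^sup>2 + z\<^sup>2 = 1}"

text \<open>The standard area measure
  on S^2 satisfies sigma(E) = 3 * lambda(cone E) (lambda = Lebesgue measure on R^3),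
  so E is sigma-null iff its cone is Lebesgue-null.\<close>
definition sphere_cone :: "(real \<times> real \<times> real) set \<Rightarrow> (real \<times> real \<times> real) set" where
  "sphere_cone E = {r *\<^sub>R v | r v. 0 < r \<and> r \<le> 1 \<and> v \<in> E}"

definition ae_sphere2 :: "((real \<times> real \<times> real) \<Rightarrow> bool) \<Rightarrow> bool" where
  "ae_sphere2 P \<longleftrightarrow> sphere_cone {v \<in> sphere2. \<not> P v} \<in> null_sets lebesgue"

text \<open>Local maxima / minima of a real function (functions on S^1 are 2pi-periodic
  functions on R; local extrema on S^1 are those in [0, 2pi)).\<close>
definition is_local_max :: "(real \<Rightarrow> real) \<Rightarrow> real \<Rightarrow> bool" where
  "is_local_max g t \<longleftrightarrow> (\<exists>e>0. \<forall>s. \<bar>s - t\<bar> < e \<longrightarrow> g s \<le> g t)"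

definition is_local_min :: "(real \<Rightarrow> real) \<Rightarrow> real \<Rightarrow> bool" where
  "is_local_min g t \<longleftrightarrow> (\<exists>e>0. \<forall>s. \<bar>s - t\<bar> < e \<longrightarrow> g t \<le> g s)"

definition is_local_extremum :: "(real \<Rightarrow> real) \<Rightarrow> real \<Rightarrow> bool" where
  "is_local_extremum g t \<longleftrightarrow> is_local_max g t \<or> is_local_min g t"

definition at_least :: "nat \<Rightarrow> 'a set \<Rightarrow> bool" where
  "at_least m A \<longleftrightarrow> (\<exists>B \<subseteq> A. finite B \<and> card B = m)"

definition smooth_real :: "(real \<Rightarrow> real) \<Rightarrow> bool" where
  "smooth_real f \<longleftrightarrow> (\<forall>k x. ((deriv ^^ k) f) differentiable (at x))"

end

(*
  The critical points of f are simple zeros of f', so f' has an even number 2m >= 2n of zeros on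
  the circle and changes sign at each of them.  If y^2 > 4xz, the operator x + yD + zD^2 factors as
  z (D - a) (D - b) with real a, b, and every factor D - c preserves the number of sign changes of a
  periodic function: (g' - c g) e^(-ct) is the derivative of g e^(-ct), so by the mean value
  theorem it has the sign of the jump of g between consecutive sign changes.  Hence
  h_v' = (x + yD + zD^2) f' changes sign 2m times, and h_v has a local maximum between every
  change of h_v' from + to -.  This holds for every such v, so in particular for almost every one.
*)
theory Submission
  imports Defs "HOL-Library.Real_Mod"
begin

lemma periodic_shift_int:
  assumes "\<forall>t. g (t + T) = g t"
  shows "g (t + of_int k * T) = g t"
proof -
  have nat_shift: "g (s + of_nat j * T) = g s" for s j
  proof (induction j)
    case (Suc j)
    have "s + of_nat (Suc j) * T = (s + of_nat j * T) + T"
      by (simp add: algebra_simps)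
    then show ?case
      using assms[rule_format, of "s + of_nat j * T"] Suc by (simp only:)
  qed simp
  show ?thesis
    using nat_shift[of t "nat k"] nat_shift[of "t + of_int k * T" "nat (- k)"]
    by (cases "k \<ge> 0") simp_all
qed

lemma periodic_rmod:
  assumes "\<forall>t. g (t + T) = g t"
  shows "g (t rmod T) = g t"
  using periodic_shift_int[OF assms] rcong_altdef[of t "t rmod T" T]
  by (metis rcong_rmod_right_iff rcong_refl)

lemma deriv_periodic:
  assumes "\<forall>t. g (t + T) = g t"
  shows "\<forall>t. deriv g (t + T) = deriv g t"
proof
  fix t
  have "deriv g t = deriv (\<lambda>s. g (s + T)) t"
    using assms by simp
  also have "\<dots> = deriv g (t + T)"
    unfolding deriv_def using DERIV_shift[of g _ t T] by simp
  finally show "deriv g (t + T) = deriv g t" by simp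
qed

lemma is_local_max_periodic_shift:
  assumes "\<forall>t. g (t + T) = g t" "is_local_max g c"
  shows "is_local_max g (c + of_int k * T)"
proof -
  obtain e where "e > 0" and e: "\<forall>s. \<bar>s - c\<bar> < e \<longrightarrow> g s \<le> g c"
    using assms(2) unfolding is_local_max_def by blast
  have "g s \<le> g (c + of_int k * T)" if "\<bar>s - (c + of_int k * T)\<bar> < e" for s
    using e[rule_format, of "s + of_int (- k) * T"] that
      periodic_shift_int[OF assms(1), of s "- k"] periodic_shift_int[OF assms(1), of c k]
    by (simp add: algebra_simps)
  with \<open>e > 0\<close> show ?thesis
    unfolding is_local_max_def by blast
qed

lemma is_local_max_rmod:
  assumes "\<forall>t. g (t + T) = g t" "is_local_max g c"
  shows "is_local_max g (c rmod T)"
  using is_local_max_periodic_shift[OF assms] rcong_altdef[of c "c rmod T" T]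
  by (metis rcong_rmod_right_iff rcong_refl)

lemma inj_on_rmod_interval:
  assumes "T > 0"
  shows "inj_on (\<lambda>t. t rmod T) {u<..<u + T}"
  using assms by (intro inj_onI rcong_imp_eq) (auto simp: rcong_def)

lemma local_max_between:
  assumes "a < b" "\<forall>t. (g has_real_derivative g' t) (at t)" "g' a > 0" "g' b < 0"
  shows "\<exists>c. a < c \<and> c < b \<and> is_local_max g c"
proof -
  have cont: "continuous_on {a..b} g"
    using assms(2) by (meson DERIV_continuous continuous_at_imp_continuous_on)
  obtain c where c: "a \<le> c" "c \<le> b" and c_max: "\<forall>t\<in>{a..b}. g t \<le> g c"
    using continuous_attains_sup[OF compact_Icc _ cont] assms(1) by fastforce
  obtain d1 where "d1 > 0" and d1: "\<forall>h>0. h < d1 \<longrightarrow> g a < g (a + h)"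
    using DERIV_pos_inc_right[OF assms(2)[rule_format] assms(3)] by blast
  obtain d2 where "d2 > 0" and d2: "\<forall>h>0. h < d2 \<longrightarrow> g b < g (b - h)"
    using DERIV_neg_dec_left[OF assms(2)[rule_format] assms(4)] by blast
  have "c \<noteq> a"
  proof
    assume "c = a"
    define h where "h = min (d1 / 2) (b - a)"
    have "0 < h" "h < d1" "a + h \<in> {a..b}"
      using \<open>d1 > 0\<close> assms(1) unfolding h_def by auto
    then show False
      using d1 c_max \<open>c = a\<close> by fastforce
  qed
  moreover have "c \<noteq> b"
  proof
    assume "c = b"
    define h where "h = min (d2 / 2) (b - a)"
    have "0 < h" "h < d2" "b - h \<in> {a..b}"
      using \<open>d2 > 0\<close> assms(1) unfolding h_def by auto
    then show False
      using d2 c_max \<open>c = b\<close> by fastforce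
  qed
  ultimately have "a < c" "c < b"
    using c by auto
  moreover have "is_local_max g c"
    unfolding is_local_max_def
    using \<open>a < c\<close> \<open>c < b\<close> c_max
    by (intro exI[of _ "min (c - a) (b - c)"]) (auto simp: abs_less_iff)
  ultimately show ?thesis by blast
qed

lemma simple_zero_opposite_signs:
  assumes "(g has_real_derivative l) (at z)" "g z = 0" "l \<noteq> 0"
  obtains d where "d > 0" "\<And>h. 0 < h \<Longrightarrow> h < d \<Longrightarrow> g (z - h) * g (z + h) < 0"
proof (cases "l > 0")
  case True
  obtain d1 where "d1 > 0" "\<forall>h>0. h < d1 \<longrightarrow> g z < g (z + h)"
    using DERIV_pos_inc_right[OF assms(1) True] by blast
  moreover obtain d2 where "d2 > 0" "\<forall>h>0. h < d2 \<longrightarrow> g (z - h) < g z"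
    using DERIV_pos_inc_left[OF assms(1) True] by blast
  ultimately show ?thesis
    using that[of "min d1 d2"] assms(2) by (simp add: mult_neg_pos)
next
  case False
  then have "l < 0" using assms(3) by simp
  obtain d1 where "d1 > 0" "\<forall>h>0. h < d1 \<longrightarrow> g z > g (z + h)"
    using DERIV_neg_dec_right[OF assms(1) \<open>l < 0\<close>] by blast
  moreover obtain d2 where "d2 > 0" "\<forall>h>0. h < d2 \<longrightarrow> g (z - h) > g z"
    using DERIV_neg_dec_left[OF assms(1) \<open>l < 0\<close>] by blast
  ultimately show ?thesis
    using that[of "min d1 d2"] assms(2) by (simp add: mult_pos_neg)
qed

lemma no_zero_same_sign:
  fixes g :: "real \<Rightarrow> real"
  assumes "a \<le> b" "continuous_on {a..b} g" "\<forall>t\<in>{a..b}. g t \<noteq> 0"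
  shows "g a * g b > 0"
proof (rule ccontr)
  assume "\<not> g a * g b > 0"
  then have "g a \<le> 0 \<and> 0 \<le> g b \<or> g b \<le> 0 \<and> 0 \<le> g a"
    by (auto simp: zero_less_mult_iff)
  then obtain t where "a \<le> t" "t \<le> b" "g t = 0"
    using IVT'[of g a 0 b] IVT2'[of g b 0 a] assms(1,2) by blast
  with assms(3) show False by auto
qed

lemma sign_change_at_simple_zero:
  assumes "a < z" "z < b" "\<forall>t. (g has_real_derivative g' t) (at t)" "g z = 0" "g' z \<noteq> 0"
    "\<forall>t\<in>{a..b}. t \<noteq> z \<longrightarrow> g t \<noteq> 0"
  shows "g a * g b < 0"
proof -
  have cont: "continuous_on S g" for S
    using assms(3) by (meson DERIV_continuous continuous_at_imp_continuous_on)
  obtain d where "d > 0" and d: "\<And>h. 0 < h \<Longrightarrow> h < d \<Longrightarrow> g (z - h) * g (z + h) < 0"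
    using simple_zero_opposite_signs[OF assms(3)[rule_format] assms(4,5)] by blast
  define h where "h = min (d / 2) (min (z - a) (b - z))"
  have h: "0 < h" "h < d" "a \<le> z - h" "z + h \<le> b"
    using \<open>d > 0\<close> assms(1,2) unfolding h_def by auto
  have "g a * g (z - h) > 0"
    using no_zero_same_sign[OF h(3) cont] assms(6) h by auto
  moreover have "g (z + h) * g b > 0"
    using no_zero_same_sign[OF h(4) cont] assms(6) h by auto
  moreover have "g (z - h) * g (z + h) < 0"
    using d h by blast
  ultimately show ?thesis
    by (auto simp: zero_less_mult_iff mult_less_0_iff)
qed

lemma finite_simple_zeros:
  assumes "\<forall>t. (g has_real_derivative g' t) (at t)" "\<forall>t. g t = 0 \<longrightarrow> g' t \<noteq> 0"
  shows "finite {t \<in> {a..b}. g t = 0}"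
proof -
  have "closed {t. g t = 0}"
    using assms(1) by (intro closed_Collect_eq) (auto intro: DERIV_continuous continuous_at_imp_continuous_on)
  have "\<not> z islimpt {t. g t = 0}" for z
  proof
    assume lz: "z islimpt {t. g t = 0}"
    then have "g z = 0"
      using \<open>closed {t. g t = 0}\<close> closed_limpt by blast
    then obtain d where "d > 0" and d: "\<And>h. 0 < h \<Longrightarrow> h < d \<Longrightarrow> g (z - h) * g (z + h) < 0"
      using simple_zero_opposite_signs assms by metis
    obtain t where "g t = 0" "t \<noteq> z" "dist t z < d"
      using lz \<open>d > 0\<close> unfolding islimpt_approachable by auto
    then show False
      using d[of "\<bar>t - z\<bar>"] by (cases "t < z") (auto simp: dist_real_def)
  qed
  then show ?thesis
    using finite_not_islimpt_in_compact[of "{a..b}" "{t. g t = 0}"] by (simp add: Int_def)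
qed

lemma sign_change_between_consecutive_zeros:
  assumes "\<forall>t. (g has_real_derivative g' t) (at t)" "\<forall>t. g t = 0 \<longrightarrow> g' t \<noteq> 0"
    and "strict_mono zz" "\<And>i. g (zz i) = 0"
    and "\<And>i t. zz i < t \<Longrightarrow> t < zz (Suc i) \<Longrightarrow> g t \<noteq> 0"
  shows "g ((zz i + zz (Suc i)) / 2) * g ((zz (Suc i) + zz (Suc (Suc i))) / 2) < 0"
proof (rule sign_change_at_simple_zero[OF _ _ assms(1) assms(4)])
  have "zz i < zz (Suc i)" "zz (Suc i) < zz (Suc (Suc i))"
    using strict_monoD[OF assms(3)] by auto
  then show "(zz i + zz (Suc i)) / 2 < zz (Suc i)" "zz (Suc i) < (zz (Suc i) + zz (Suc (Suc i))) / 2"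
    "\<forall>t\<in>{(zz i + zz (Suc i)) / 2..(zz (Suc i) + zz (Suc (Suc i))) / 2}.
       t \<noteq> zz (Suc i) \<longrightarrow> g t \<noteq> 0"
    using assms(5)[of i] assms(5)[of "Suc i"] by (auto simp: neq_iff)
  show "g' (zz (Suc i)) \<noteq> 0"
    using assms(2,4) by blast
qed

lemma alternating_signs_of_neg_products:
  fixes s :: "nat \<Rightarrow> real"
  assumes "\<And>i. s i * s (Suc i) < 0"
  shows "s 0 * (-1)^i * s i > 0"
proof (induction i)
  case 0
  have "s 0 \<noteq> 0"
    using assms[of 0] by auto
  then show ?case
    by (simp add: not_square_less_zero less_le)
next
  case (Suc i)
  then show ?case
    using assms[of i] by (auto simp: zero_less_mult_iff mult_less_0_iff)
qed

lemma strict_mono_cyclic_lift: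
  fixes xs :: "real list"
  assumes "sorted_wrt (<) xs" "xs \<noteq> []" "set xs \<subseteq> {0..<T}"
  shows "strict_mono (\<lambda>i. xs ! (i mod length xs) + of_nat (i div length xs) * T)"
  unfolding strict_mono_Suc_iff
proof
  fix i
  define K where "K = length xs"
  have "K > 0"
    using assms(2) unfolding K_def by simp
  have xs_range: "xs ! j \<in> {0..<T}" if "j < K" for j
    using assms(3) nth_mem[of j xs] that unfolding K_def by blast
  show "xs ! (i mod K) + of_nat (i div K) * T < xs ! (Suc i mod K) + of_nat (Suc i div K) * T"
  proof (cases "Suc (i mod K) < K")
    case True
    then have "Suc i mod K = Suc (i mod K)" "Suc i div K = i div K"
      by (simp_all add: mod_Suc div_Suc)
    then show ?thesis
      using sorted_wrt_nth_less[OF assms(1), of "i mod K" "Suc (i mod K)"] True unfolding K_def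
      by simp
  next
    case False
    then have "Suc (i mod K) = K"
      using \<open>K > 0\<close> mod_less_divisor[of K i] by linarith
    then have "Suc i mod K = 0" "Suc i div K = Suc (i div K)"
      by (simp_all add: mod_Suc div_Suc)
    then show ?thesis
      using xs_range[of "i mod K"] xs_range[of 0] \<open>K > 0\<close>
      by (simp add: algebra_simps)
  qed
qed

lemma cyclic_enumeration:
  fixes Z :: "real set"
  assumes "finite Z" "Z \<noteq> {}" "Z \<subseteq> {0..<T}"
  obtains zz where "strict_mono zz" "\<And>i. zz (i + card Z) = zz i + T"
    "\<And>i. zz i rmod T \<in> Z" "\<And>i t. zz i < t \<Longrightarrow> t < zz (Suc i) \<Longrightarrow> t rmod T \<notin> Z"
proof -
  define xs where "xs = sorted_list_of_set Z"
  define K where "K = card Z"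
  have xs_sorted: "sorted_wrt (<) xs" and xs_set: "set xs = Z" and xs_len: "length xs = K"
    unfolding xs_def K_def using assms(1) by auto
  have "K > 0"
    using assms(1,2) unfolding K_def by (simp add: card_gt_0_iff)
  have xs_range: "xs ! j \<in> {0..<T}" if "j < K" for j
    using assms(3) nth_mem[of j xs] that xs_set xs_len by auto
  then have "T > 0"
    using \<open>K > 0\<close> by fastforce
  define zz where "zz i = xs ! (i mod K) + of_nat (i div K) * T" for i
  have "strict_mono zz"
    using strict_mono_cyclic_lift[OF xs_sorted] xs_set xs_len assms(2,3) unfolding zz_def by auto
  moreover have "zz (i + K) = zz i + T" for i
    unfolding zz_def using \<open>K > 0\<close> by (simp add: algebra_simps)
  moreover have zz_rmod: "zz i rmod T = xs ! (i mod K)" for i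
    using xs_range[of "i mod K"] \<open>K > 0\<close> \<open>T > 0\<close> unfolding zz_def
    by (intro rmod_unique[of _ _ _ "int (i div K)"]) auto
  moreover have "zz i rmod T \<in> Z" for i
    unfolding zz_rmod using nth_mem[of "i mod K" xs] xs_set xs_len \<open>K > 0\<close> by simp
  moreover have "t rmod T \<notin> Z" if "zz i < t" "t < zz (Suc i)" for i t
  proof
    assume "t rmod T \<in> Z"
    then obtain j where "j < K" "xs ! j = t rmod T"
      using xs_set xs_len by (metis in_set_conv_nth)
    obtain k where k: "t = t rmod T + of_int k * T"
      using rcong_altdef[of "t rmod T" t T] by (auto simp: rcong_def)
    have "0 \<le> zz i"
      unfolding zz_def using xs_range[of "i mod K"] \<open>K > 0\<close> \<open>T > 0\<close> by simp
    then have "(- 1) * T < of_int k * T"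
      using k that(1) rmod_less[OF \<open>T > 0\<close>, of t] by linarith
    then have "0 \<le> k"
      using \<open>T > 0\<close> mult_less_cancel_right_pos[of T "- 1" "of_int k"] by simp
    then have "t = zz (j + nat k * K)"
      unfolding zz_def using k \<open>j < K\<close> \<open>xs ! j = t rmod T\<close> by simp
    then show False
      using that \<open>strict_mono zz\<close> by (metis not_less_eq strict_mono_less)
  qed
  ultimately show ?thesis
    using that unfolding K_def by blast
qed

lemma at_least_mono: "at_least m A \<Longrightarrow> n \<le> m \<Longrightarrow> at_least n A"
  unfolding at_least_def by (metis obtain_subset_with_card_n order.trans)

lemma at_least_imp_card_ge: "at_least m A \<Longrightarrow> finite B \<Longrightarrow> A \<subseteq> B \<Longrightarrow> m \<le> card B"
  unfolding at_least_def by (metis card_mono order.trans)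

lemma at_least_rmod_of_window:
  assumes "T > 0" "strict_mono_on {..<m} c" "\<And>j. j < m \<Longrightarrow> c j \<in> {u<..<u + T} \<and> P (c j rmod T)"
  shows "at_least m {t \<in> {0..<T}. P t}"
proof -
  have "c ` {..<m} \<subseteq> {u<..<u + T}"
    using assms(3) by blast
  then have "inj_on ((\<lambda>t. t rmod T) \<circ> c) {..<m}"
    using comp_inj_on[OF strict_mono_on_imp_inj_on[OF assms(2)]] inj_on_subset inj_on_rmod_interval[OF assms(1)]
    by blast
  then have "card ((\<lambda>j. c j rmod T) ` {..<m}) = m"
    by (simp add: card_image comp_def)
  moreover have "(\<lambda>j. c j rmod T) ` {..<m} \<subseteq> {t \<in> {0..<T}. P t}"
    using assms(1,3) rmod_nonneg rmod_less by auto
  ultimately show ?thesis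
    unfolding at_least_def by blast
qed

text \<open>For 2\<pi>-periodic \<open>g\<close>: \<open>g\<close> has at least \<open>2m\<close> sign changes on the circle, witnessed by
  \<open>p 0 < p 1 < \<dots> < p (2m) = p 0 + 2\<pi>\<close> with \<open>g (p i)\<close> of sign \<open>(-1)^i sgn \<sigma>\<close>.\<close>
definition alternates_sign :: "(real \<Rightarrow> real) \<Rightarrow> nat \<Rightarrow> bool" where
  "alternates_sign g m \<longleftrightarrow> (\<exists>p \<sigma>. (\<forall>i<2*m. p i < p (Suc i)) \<and> p (2*m) = p 0 + 2*pi \<and>
      (\<forall>i\<le>2*m. \<sigma> * (-1)^i * g (p i) > 0))"

lemma alternates_sign_pos: "alternates_sign g m \<Longrightarrow> m \<ge> 1"
  unfolding alternates_sign_def by (cases m) auto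

lemma alternates_sign_scale:
  assumes "alternates_sign g m" "c \<noteq> 0"
  shows "alternates_sign (\<lambda>t. c * g t) m"
proof -
  obtain p \<sigma> where "\<forall>i<2*m. p i < p (Suc i)" "p (2*m) = p 0 + 2*pi"
    and "\<forall>i\<le>2*m. \<sigma> * (-1)^i * g (p i) > 0"
    using assms(1) unfolding alternates_sign_def by blast
  moreover have "(\<sigma> / c) * (-1)^i * (c * g t) = \<sigma> * (-1)^i * g t" for i t
    using assms(2) by simp
  ultimately show ?thesis
    unfolding alternates_sign_def by metis
qed

lemma alternates_sign_interlaced:
  assumes "m \<ge> 1" "p (2*m) = p 0 + 2*pi" "\<forall>t. G (t + 2*pi) = G t"
    and "\<And>i. i < 2*m \<Longrightarrow> p i < w i \<and> w i < p (Suc i) \<and> \<sigma> * (-1)^i * G (w i) > 0"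
  shows "alternates_sign G m"
proof -
  define q where "q i = (if i < 2*m then w i else w 0 + 2*pi)" for i
  have "\<forall>i<2*m. q i < q (Suc i)"
  proof (intro allI impI)
    fix i assume "i < 2*m"
    then consider "Suc i < 2*m" | "Suc i = 2*m" by linarith
    then show "q i < q (Suc i)"
    proof cases
      case 1
      then show ?thesis using assms(4)[of i] assms(4)[of "Suc i"] unfolding q_def by force
    next
      case 2
      then show ?thesis using assms(1,2) assms(4)[of i] assms(4)[of 0] unfolding q_def by force
    qed
  qed
  moreover have "q (2*m) = q 0 + 2*pi"
    unfolding q_def using assms(1) by simp
  moreover have "\<forall>i\<le>2*m. \<sigma> * (-1)^i * G (q i) > 0"
    using assms(1,3) assms(4)[of 0] assms(4) unfolding q_def by (auto simp: le_less)
  ultimately show ?thesis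
    unfolding alternates_sign_def by blast
qed

lemma neg_to_pos_imp_deriv_minus_pos:
  assumes "a < b" "\<forall>t. (g has_real_derivative g' t) (at t)" "g a < 0" "0 < g b"
  shows "\<exists>w. a < w \<and> w < b \<and> g' w - c * g w > 0"
proof -
  define k where "k t = exp (- c * t) * g t" for t
  have "(k has_real_derivative exp (- c * t) * (g' t - c * g t)) (at t)" for t
    unfolding k_def
    by (auto intro!: derivative_eq_intros assms(2)[rule_format] simp: algebra_simps)
  then obtain w where "a < w" "w < b" and w: "k b - k a = (b - a) * (exp (- c * w) * (g' w - c * g w))"
    using MVT2[OF assms(1), of k "\<lambda>t. exp (- c * t) * (g' t - c * g t)"] by blast
  moreover have "k a < 0" "0 < k b"
    using assms(3,4) unfolding k_def by (simp_all add: mult_pos_neg)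
  ultimately have "(b - a) * exp (- c * w) * (g' w - c * g w) > 0"
    by (simp add: mult.assoc)
  moreover have "(b - a) * exp (- c * w) > 0"
    using assms(1) by simp
  ultimately have "g' w - c * g w > 0"
    using zero_less_mult_pos by blast
  with \<open>a < w\<close> \<open>w < b\<close> show ?thesis by blast
qed

lemma alternates_sign_deriv_minus:
  assumes "alternates_sign g m" "\<forall>t. (g has_real_derivative g' t) (at t)"
    "\<forall>t. g (t + 2*pi) = g t" "\<forall>t. g' (t + 2*pi) = g' t"
  shows "alternates_sign (\<lambda>t. g' t - c * g t) m"
proof -
  obtain p \<sigma> where p_step: "\<forall>i<2*m. p i < p (Suc i)" and p_cycle: "p (2*m) = p 0 + 2*pi"
    and p_sign: "\<forall>i\<le>2*m. \<sigma> * (-1)^i * g (p i) > 0"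
    using assms(1) unfolding alternates_sign_def by blast
  have "\<exists>w. p i < w \<and> w < p (Suc i) \<and> - \<sigma> * (-1)^i * (g' w - c * g w) > 0" if "i < 2*m" for i
  proof -
    let ?s = "- \<sigma> * (-1)^i"
    have "\<forall>t. ((\<lambda>t. ?s * g t) has_real_derivative ?s * g' t) (at t)"
      using assms(2) by (auto intro!: derivative_eq_intros)
    moreover have "?s * g (p i) < 0"
      using p_sign that by simp
    moreover have "0 < ?s * g (p (Suc i))"
      using p_sign[rule_format, of "Suc i"] that by simp
    ultimately obtain w where "p i < w" "w < p (Suc i)" "?s * g' w - c * (?s * g w) > 0"
      using neg_to_pos_imp_deriv_minus_pos[of "p i" "p (Suc i)" "\<lambda>t. ?s * g t" "\<lambda>t. ?s * g' t" c]
        p_step \<open>i < 2*m\<close> by blast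
    then show ?thesis
      by (auto simp: algebra_simps)
  qed
  then obtain w where "\<And>i. i < 2*m \<Longrightarrow>
      p i < w i \<and> w i < p (Suc i) \<and> - \<sigma> * (-1)^i * (g' (w i) - c * g (w i)) > 0"
    by metis
  moreover have "\<forall>t. g' (t + 2*pi) - c * g (t + 2*pi) = g' t - c * g t"
    using assms(3,4) by simp
  ultimately show ?thesis
    using alternates_sign_interlaced[OF alternates_sign_pos[OF assms(1)] p_cycle,
        of "\<lambda>t. g' t - c * g t" w "- \<sigma>"]
    by blast
qed

lemma alternates_sign_second_order:
  assumes "alternates_sign g m"
    and "\<forall>t. (g has_real_derivative g' t) (at t)" "\<forall>t. (g' has_real_derivative g'' t) (at t)"
    and "\<forall>t. g (t + 2*pi) = g t" "\<forall>t. g' (t + 2*pi) = g' t" "\<forall>t. g'' (t + 2*pi) = g'' t"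
    and "y\<^sup>2 - 4 * x * z > 0"
  shows "alternates_sign (\<lambda>t. x * g t + y * g' t + z * g'' t) m"
proof (cases "z = 0")
  case True
  then have "y \<noteq> 0"
    using assms(7) by auto
  have "alternates_sign (\<lambda>t. g' t - (- x / y) * g t) m"
    using alternates_sign_deriv_minus[OF assms(1,2,4,5)] .
  then have "alternates_sign (\<lambda>t. y * (g' t - (- x / y) * g t)) m"
    using alternates_sign_scale \<open>y \<noteq> 0\<close> by blast
  moreover have "y * (g' t - (- x / y) * g t) = x * g t + y * g' t + z * g'' t" for t
    using True \<open>y \<noteq> 0\<close> by (simp add: algebra_simps)
  ultimately show ?thesis
    by simp
next
  case False
  \<comment> \<open>\<open>x + y D + z D\<^sup>2 = z (D - a) (D - b)\<close> with \<open>a, b\<close> the real roots of \<open>z r\<^sup>2 + y r + x\<close>\<close>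
  define r where "r = sqrt (y\<^sup>2 - 4 * x * z)"
  define a where "a = (- y + r) / (2 * z)"
  define b where "b = (- y - r) / (2 * z)"
  have "r\<^sup>2 = y\<^sup>2 - 4 * x * z"
    unfolding r_def using assms(7) by simp
  then have "(- y + r) * (- y - r) = 4 * x * z"
    by (simp add: power2_eq_square algebra_simps)
  then have vieta: "z * (a + b) = - y" "z * (a * b) = x"
    unfolding a_def b_def using False by (simp_all add: field_simps)
  have "\<forall>t. ((\<lambda>t. g' t - b * g t) has_real_derivative g'' t - b * g' t) (at t)"
    using assms(2,3) by (auto intro!: derivative_eq_intros)
  moreover have "alternates_sign (\<lambda>t. g' t - b * g t) m"
    using alternates_sign_deriv_minus[OF assms(1,2,4,5)] .
  ultimately have "alternates_sign (\<lambda>t. (g'' t - b * g' t) - a * (g' t - b * g t)) m"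
    using alternates_sign_deriv_minus assms(4,5,6) by simp
  then have "alternates_sign (\<lambda>t. z * ((g'' t - b * g' t) - a * (g' t - b * g t))) m"
    using alternates_sign_scale False by blast
  moreover have "z * ((g'' t - b * g' t) - a * (g' t - b * g t)) = x * g t + y * g' t + z * g'' t" for t
  proof -
    have "z * ((g'' t - b * g' t) - a * (g' t - b * g t))
        = z * (a * b) * g t - z * (a + b) * g' t + z * g'' t"
      by (simp add: algebra_simps)
    then show ?thesis
      unfolding vieta by simp
  qed
  ultimately show ?thesis
    by simp
qed

lemma alternates_sign_of_enumerated_zeros:
  assumes deriv: "\<forall>t. (g has_real_derivative g' t) (at t)" and periodic: "\<forall>t. g (t + 2*pi) = g t"
    and simple: "\<forall>t. g t = 0 \<longrightarrow> g' t \<noteq> 0"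
    and "strict_mono zz" and zz_period: "\<And>i. zz (i + K) = zz i + 2*pi"
    and zz_zero: "\<And>i. g (zz i) = 0"
    and zz_gap: "\<And>i t. zz i < t \<Longrightarrow> t < zz (Suc i) \<Longrightarrow> g t \<noteq> 0"
  shows "even K" "alternates_sign g (K div 2)"
proof -
  define mid where "mid i = (zz i + zz (Suc i)) / 2" for i
  have "g (mid i) * g (mid (Suc i)) < 0" for i
    unfolding mid_def
    using sign_change_between_consecutive_zeros[OF deriv simple \<open>strict_mono zz\<close> zz_zero zz_gap] .
  then have signs: "g (mid 0) * (-1)^i * g (mid i) > 0" for i
    by (rule alternating_signs_of_neg_products)
  have mid_period: "mid (i + K) = mid i + 2*pi" for i
    using zz_period[of i] zz_period[of "Suc i"] unfolding mid_def by simp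
  then have "g (mid K) = g (mid 0)"
    using periodic mid_period[of 0] by simp
  then show "even K"
    using signs[of K] by (auto simp: zero_less_mult_iff mult_less_0_iff minus_one_power_iff split: if_splits)
  then have K: "2 * (K div 2) = K"
    by simp
  show "alternates_sign g (K div 2)"
    unfolding alternates_sign_def K
  proof (intro exI conjI)
    show "\<forall>i<K. mid i < mid (Suc i)"
      using strict_monoD[OF \<open>strict_mono zz\<close>] unfolding mid_def by (auto simp: field_simps)
    show "mid K = mid 0 + 2*pi"
      using mid_period[of 0] by simp
    show "\<forall>i\<le>K. g (mid 0) * (-1)^i * g (mid i) > 0"
      using signs by blast
  qed
qed

lemma alternates_sign_of_simple_zeros:
  assumes deriv: "\<forall>t. (g has_real_derivative g' t) (at t)" and periodic: "\<forall>t. g (t + 2*pi) = g t"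
    and simple: "\<forall>t. g t = 0 \<longrightarrow> g' t \<noteq> 0"
    and zeros: "card {t \<in> {0..<2*pi}. g t = 0} \<ge> 2*n" and "n \<ge> 1"
  shows "\<exists>m\<ge>n. alternates_sign g m"
proof -
  define Z where "Z = {t \<in> {0..<2*pi}. g t = 0}"
  define K where "K = card Z"
  have "K \<ge> 2*n"
    using zeros unfolding K_def Z_def .
  then have "Z \<noteq> {}"
    using \<open>n \<ge> 1\<close> unfolding K_def by auto
  moreover have "finite Z"
    using finite_simple_zeros[OF deriv simple, of 0 "2*pi"] unfolding Z_def
    by (rule finite_subset[rotated]) auto
  moreover have "Z \<subseteq> {0..<2*pi}"
    unfolding Z_def by blast
  ultimately obtain zz where "strict_mono zz" "\<And>i. zz (i + K) = zz i + 2*pi"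
    and "\<And>i. zz i rmod (2*pi) \<in> Z"
    and "\<And>i t. zz i < t \<Longrightarrow> t < zz (Suc i) \<Longrightarrow> t rmod (2*pi) \<notin> Z"
    using cyclic_enumeration unfolding K_def by blast
  moreover have "g t = 0 \<longleftrightarrow> t rmod (2*pi) \<in> Z" for t
    unfolding Z_def using periodic_rmod[OF periodic] rmod_nonneg[of "2*pi"] rmod_less[of "2*pi"] by simp
  ultimately have "even K" "alternates_sign g (K div 2)"
    using alternates_sign_of_enumerated_zeros[OF deriv periodic simple, of zz K] by blast+
  moreover have "K div 2 \<ge> n"
    using \<open>K \<ge> 2*n\<close> by simp
  ultimately show ?thesis by blast
qed

lemma at_least_local_max_of_alternating_deriv:
  assumes "alternates_sign g' m" "\<forall>t. (g has_real_derivative g' t) (at t)" "\<forall>t. g (t + 2*pi) = g t"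
  shows "at_least m {t \<in> {0..<2*pi}. is_local_max g t}"
proof -
  obtain p \<sigma> where p_step: "\<forall>i<2*m. p i < p (Suc i)" and p_cycle: "p (2*m) = p 0 + 2*pi"
    and p_sign: "\<forall>i\<le>2*m. \<sigma> * (-1)^i * g' (p i) > 0"
    using assms(1) unfolding alternates_sign_def by blast
  have p_mono: "p i \<le> p j" if "i \<le> j" "j \<le> 2*m" for i j
    using lift_Suc_mono_le_ivl[of "{..<2*m}" p i j] p_step that by fastforce
  define off :: nat where "off = (if \<sigma> > 0 then 0 else 1)"
  have "off \<le> 1"
    unfolding off_def by simp
  have "\<exists>c. p (2*j + off) < c \<and> c < p (2*j + off + 1) \<and> is_local_max g c" if "j < m" for j
  proof (rule local_max_between[OF _ assms(2)])
    have "2*j + off + 1 \<le> 2*m"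
      using that unfolding off_def by auto
    then have "\<sigma> * (-1)^(2*j + off) * g' (p (2*j + off)) > 0"
      and "\<sigma> * (-1)^(2*j + off + 1) * g' (p (2*j + off + 1)) > 0"
      using p_sign by auto
    then show "g' (p (2*j + off)) > 0" "g' (p (2*j + off + 1)) < 0"
      unfolding off_def by (auto split: if_splits simp: zero_less_mult_iff mult_less_0_iff)
    show "p (2*j + off) < p (2*j + off + 1)"
      using p_step that unfolding off_def by auto
  qed
  then obtain c where c: "\<And>j. j < m \<Longrightarrow>
      p (2*j + off) < c j \<and> c j < p (2*j + off + 1) \<and> is_local_max g (c j)"
    by metis
  have c_mono: "strict_mono_on {..<m} c"
  proof (rule strict_mono_onI)
    fix i j assume "i \<in> {..<m}" "j \<in> {..<m}" "i < j"
    then have "p (2*i + off + 1) \<le> p (2*j + off)"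
      using p_mono[of "2*i + off + 1" "2*j + off"] \<open>off \<le> 1\<close> by auto
    then show "c i < c j"
      using c[of i] c[of j] \<open>i \<in> {..<m}\<close> \<open>j \<in> {..<m}\<close> by fastforce
  qed
  have c_window: "c j \<in> {p 0<..<p 0 + 2*pi} \<and> is_local_max g (c j rmod (2*pi))" if "j < m" for j
    using c[OF that] p_mono[of 0 "2*j + off"] p_mono[of "2*j + off + 1" "2*m"] p_cycle that \<open>off \<le> 1\<close>
      is_local_max_rmod[OF assms(3)] by auto
  show ?thesis
    using at_least_rmod_of_window[OF _ c_mono c_window] by simp
qed

lemma at_least_local_max_second_order:
  assumes "alternates_sign g' m"
    and "\<forall>t. (g has_real_derivative g' t) (at t)" "\<forall>t. (g' has_real_derivative g'' t) (at t)"
      "\<forall>t. (g'' has_real_derivative g''' t) (at t)"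
    and "\<forall>t. g (t + 2*pi) = g t" "\<forall>t. g' (t + 2*pi) = g' t" "\<forall>t. g'' (t + 2*pi) = g'' t"
      "\<forall>t. g''' (t + 2*pi) = g''' t"
    and "y\<^sup>2 - 4 * x * z > 0"
  shows "at_least m {t \<in> {0..<2*pi}. is_local_max (\<lambda>s. x * g s + y * g' s + z * g'' s) t}"
proof (rule at_least_local_max_of_alternating_deriv)
  show "alternates_sign (\<lambda>t. x * g' t + y * g'' t + z * g''' t) m"
    using alternates_sign_second_order[OF assms(1,3,4,6,7,8,9)] .
  show "\<forall>t. ((\<lambda>s. x * g s + y * g' s + z * g'' s) has_real_derivative
      x * g' t + y * g'' t + z * g''' t) (at t)"
    using assms(2,3,4) by (auto intro!: derivative_eq_intros)
  show "\<forall>t. x * g (t + 2*pi) + y * g' (t + 2*pi) + z * g'' (t + 2*pi) = x * g t + y * g' t + z * g'' t"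
    using assms(5,6,7) by simp
qed

lemma smooth_real_has_deriv:
  assumes "smooth_real f"
  shows "((deriv ^^ k) f has_real_derivative (deriv ^^ Suc k) f t) (at t)"
  using assms unfolding smooth_real_def by (simp add: DERIV_deriv_iff_real_differentiable)

lemma local_extremum_deriv_zero:
  assumes "(f has_real_derivative l) (at t)" "is_local_extremum f t"
  shows "l = 0"
  using assms(2) unfolding is_local_extremum_def is_local_max_def is_local_min_def
  by (metis DERIV_local_max DERIV_local_min assms(1) abs_minus_commute)

lemma ae_sphere2_if_all:
  assumes "\<And>v. v \<in> sphere2 \<Longrightarrow> P v"
  shows "ae_sphere2 P"
proof -
  have "sphere_cone {v \<in> sphere2. \<not> P v} = {}"
    unfolding sphere_cone_def using assms by blast
  then show ?thesis
    unfolding ae_sphere2_def by simp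
qed

lemma alternates_sign_deriv_of_extrema:
  assumes "n \<ge> 1" "smooth_real f" "\<forall>t. f (t + 2*pi) = f t"
    and "at_least (2*n) {t \<in> {0..<2*pi}. is_local_extremum f t}"
    and "\<forall>t. deriv f t = 0 \<longrightarrow> deriv (deriv f) t \<noteq> 0"
  shows "\<exists>m\<ge>n. alternates_sign (deriv f) m"
proof (rule alternates_sign_of_simple_zeros[OF _ _ assms(5) _ assms(1)])
  show f': "\<forall>t. (deriv f has_real_derivative deriv (deriv f) t) (at t)"
    using smooth_real_has_deriv[OF assms(2), of 1] by simp
  show "\<forall>t. deriv f (t + 2*pi) = deriv f t"
    using deriv_periodic[OF assms(3)] .
  have "{t \<in> {0..<2*pi}. is_local_extremum f t} \<subseteq> {t \<in> {0..<2*pi}. deriv f t = 0}"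
    using local_extremum_deriv_zero smooth_real_has_deriv[OF assms(2), of 0] by auto
  moreover have "finite {t \<in> {0..<2*pi}. deriv f t = 0}"
    using finite_simple_zeros[OF f' assms(5), of 0 "2*pi"] by (rule finite_subset[rotated]) auto
  ultimately show "2*n \<le> card {t \<in> {0..<2*pi}. deriv f t = 0}"
    using at_least_imp_card_ge assms(4) by blast
qed

theorem lemma4p1:
  fixes f :: "real \<Rightarrow> real" and n :: nat
  assumes "n \<ge> 1"
    and "smooth_real f"
    and "\<forall>t. f (t + 2 * pi) = f t"
    and "at_least (2 * n) {t \<in> {0..<2 * pi}. is_local_extremum f t}"
    and "\<forall>t. deriv f t = 0 \<longrightarrow> deriv (deriv f) t \<noteq> 0"
  shows "ae_sphere2 (\<lambda>(x, y, z). y\<^sup>2 - 4 * x * z > 0 \<longrightarrow>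
           at_least n {t \<in> {0..<2 * pi}.
             is_local_max (\<lambda>s. x * f s + y * deriv f s + z * deriv (deriv f) s) t})"
proof -
  obtain m where "m \<ge> n" and f'_alt: "alternates_sign (deriv f) m"
    using alternates_sign_deriv_of_extrema[OF assms] by blast
  have f_derivs: "\<forall>t. (f has_real_derivative deriv f t) (at t)"
      "\<forall>t. (deriv f has_real_derivative deriv (deriv f) t) (at t)"
      "\<forall>t. (deriv (deriv f) has_real_derivative deriv (deriv (deriv f)) t) (at t)"
    using smooth_real_has_deriv[OF assms(2), of 0] smooth_real_has_deriv[OF assms(2), of 1]
      smooth_real_has_deriv[OF assms(2), of 2]
    by (simp_all add: numeral_eq_Suc)
  have periodic: "\<forall>t. f (t + 2*pi) = f t" "\<forall>t. deriv f (t + 2*pi) = deriv f t"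
      "\<forall>t. deriv (deriv f) (t + 2*pi) = deriv (deriv f) t"
      "\<forall>t. deriv (deriv (deriv f)) (t + 2*pi) = deriv (deriv (deriv f)) t"
    using assms(3) by (simp_all add: deriv_periodic)
  show ?thesis
    using at_least_local_max_second_order[OF f'_alt f_derivs periodic] \<open>m \<ge> n\<close>
    by (intro ae_sphere2_if_all) (auto intro: at_least_mono)
qed

end
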